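(* Let $X$ be a $d$-dimensional Hilbert space, $1\le k<d$, $\Omega\subset X$ an open convex set, $g$ and $h$ Lipschitz convex functions on $\Omega$, $\varepsilon>0$, and $f:=g-h$. For each $k$-dimensional subspace $K\subset X$ let $Z_\varepsilon^K:=\{x\in\Omega: f'_+(x,v)+f'_+(x,-v)>\varepsilon\text{ whenever }v\in K,\ |v|=1\}$, and let $Z_\varepsilon:=\bigcup\{Z_\varepsilon^K: K\text{ a }k\text{-dimensional subspace of }X\}$. Then (i) each $Z_\varepsilon^K$ can be covered by finitely many $(d-k)$-dimensional DC surfaces associated with $K$; (ii) $Z_\varepsilon$ can be covered by finitely many $(d-k)$-dimensional DC surfaces.
   Context: $f'_+(x,v)$ denotes the one-sided directional derivative $\lim_{t\to0+}(f(x+tv)-f(x))/t$. A real function is DC if it is a difference of two convex functions; a mapping into a finite-dimensional space is DC if its composition with every linear functional is DC. For $0<m<d$, a DC surface of dimension $m$ in $X$ is a set $\{w+\varphi(w):w\in W\}$, where $W\subset X$ is an $m$-dimensional subspace and $\varphi:W\to V:=W^\perp$ is a Lipschitz DC mapping; such a surface is said to be associated with $V$. *)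

theory Defs
  imports "HOL-Analysis.Analysis"
begin

definition dir_deriv_plus :: "('a::real_normed_vector \<Rightarrow> real) \<Rightarrow> 'a \<Rightarrow> 'a \<Rightarrow> real" where
  "dir_deriv_plus f x v = Lim (at_right (0::real)) (\<lambda>t. (f (x + t *\<^sub>R v) - f x) / t)"

definition DC_fun_on :: "'a::real_vector set \<Rightarrow> ('a \<Rightarrow> real) \<Rightarrow> bool" where
  "DC_fun_on A u \<longleftrightarrow> (\<exists>c1 c2. convex_on A c1 \<and> convex_on A c2 \<and> (\<forall>x\<in>A. u x = c1 x - c2 x))"

definition DC_map_on :: "'a::real_vector set \<Rightarrow> ('a \<Rightarrow> 'b::real_vector) \<Rightarrow> bool" where
  "DC_map_on A \<phi> \<longleftrightarrow> (\<forall>l :: 'b \<Rightarrow> real. linear l \<longrightarrow> DC_fun_on A (\<lambda>x. l (\<phi> x)))"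

definition DC_surface_assoc :: "nat \<Rightarrow> 'a::euclidean_space set \<Rightarrow> 'a set \<Rightarrow> bool" where
  "DC_surface_assoc m V S \<longleftrightarrow> 0 < m \<and> m < DIM('a) \<and>
     (\<exists>W \<phi>. subspace W \<and> dim W = m \<and> V = orthogonal_comp W \<and>
        (\<forall>w\<in>W. \<phi> w \<in> V) \<and> (\<exists>C. C-lipschitz_on W \<phi>) \<and> DC_map_on W \<phi> \<and>
        S = {w + \<phi> w | w. w \<in> W})"

definition DC_surface :: "nat \<Rightarrow> 'a::euclidean_space set \<Rightarrow> bool" where
  "DC_surface m S \<longleftrightarrow> (\<exists>V. DC_surface_assoc m V S)"

definition Z_eps_K :: "'a::euclidean_space set \<Rightarrow> ('a \<Rightarrow> real) \<Rightarrow> real \<Rightarrow> 'a set \<Rightarrow> 'a set" where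
  "Z_eps_K \<Omega> f \<epsilon> K = {x \<in> \<Omega>. \<forall>v\<in>K. norm v = 1 \<longrightarrow> dir_deriv_plus f x v + dir_deriv_plus f x (- v) > \<epsilon>}"

definition Z_eps :: "'a::euclidean_space set \<Rightarrow> ('a \<Rightarrow> real) \<Rightarrow> real \<Rightarrow> nat \<Rightarrow> 'a set" where
  "Z_eps \<Omega> f \<epsilon> k = \<Union>{Z_eps_K \<Omega> f \<epsilon> K | K. subspace K \<and> dim K = k}"

end

theory Submission
  imports Defs
begin

text \<open>Extend \<open>g\<close> and \<open>h\<close> to convex Lipschitz functions \<open>G\<close>, \<open>H\<close> on the whole space. Directional
  derivatives are local and \<open>H'(x,v) + H'(x,-v) \<ge> 0\<close>, so it suffices to cover \<open>Z\<^sub>\<epsilon>\<^sup>K\<close> of \<open>G\<close>.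
  At a point \<open>x\<close> of it the sublinear function \<open>p = G'(x,\<cdot>)\<close> satisfies \<open>p v + p (-v) > \<epsilon>\<close> on the unit
  sphere of \<open>K\<close>; Carath\'eodory's theorem and a separation argument give \<open>c\<close> with
  \<open>p u \<ge> \<langle>c,u\<rangle> + \<rho> |u|\<close> on \<open>K\<close>, where \<open>\<rho> = \<epsilon>/(d+2)\<close>. So \<open>G - \<langle>c,\<cdot>\<rangle>\<close> has a sharp minimum at \<open>x\<close>
  along \<open>x + K\<close>, and \<open>c\<close> can be taken from a finite net. For fixed \<open>c\<close> write these points as
  \<open>x = w + k\<close> with \<open>w \<in> K\<^sup>\<bottom>\<close>, \<open>k \<in> K\<close>. The functions \<open>M q w = inf {G (w + u) - \<langle>q,u\<rangle> | u \<in> K}\<close>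
  are convex and Lipschitz, and \<open>M c w - M (c + r b) w = r \<langle>b,k\<rangle>\<close> for unit vectors \<open>b \<in> K\<close>; hence
  \<open>k\<close> is a Lipschitz DC function of \<open>w\<close>, and all these points lie on one DC graph over \<open>K\<^sup>\<bottom>\<close>.
  Part (ii) follows by applying (i) to a finite net of \<open>k\<close>-dimensional subspaces, since
  \<open>v \<mapsto> f'(x,v)\<close> is Lipschitz.\<close>

section \<open>One-sided directional derivatives of convex Lipschitz functions\<close>

lemma convex_on_difference_quotient_mono:
  fixes G :: "'a::real_vector \<Rightarrow> real"
  assumes "convex_on UNIV G" "0 < s" "s \<le> t"
  shows "(G (x + s *\<^sub>R v) - G x) / s \<le> (G (x + t *\<^sub>R v) - G x) / t"
proof -
  have t: "t > 0" using assms by simp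
  have "x + s *\<^sub>R v = (1 - s/t) *\<^sub>R x + (s/t) *\<^sub>R (x + t *\<^sub>R v)"
    using t by (simp add: algebra_simps)
  then have "G (x + s *\<^sub>R v) \<le> (1 - s/t) * G x + (s/t) * G (x + t *\<^sub>R v)"
    using convex_onD[OF assms(1), of "s/t" x "x + t *\<^sub>R v"] assms t by simp
  then have "G (x + s *\<^sub>R v) - G x \<le> (s/t) * (G (x + t *\<^sub>R v) - G x)"
    by (simp add: algebra_simps)
  then show ?thesis using assms t by (simp add: field_simps)
qed

locale convex_lipschitz =
  fixes G :: "'a::real_normed_vector \<Rightarrow> real" and L :: real
  assumes convex: "convex_on UNIV G" and lipschitz: "L-lipschitz_on UNIV G"
begin

lemma nonneg: "0 \<le> L"
  using lipschitz lipschitz_on_nonneg by blast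

lemma abs_difference_quotient_le:
  assumes "0 < t"
  shows "\<bar>(G (x + t *\<^sub>R v) - G x) / t\<bar> \<le> L * norm v"
proof -
  have "\<bar>G (x + t *\<^sub>R v) - G x\<bar> \<le> L * (t * norm v)"
    using lipschitz_onD[OF lipschitz, of "x + t *\<^sub>R v" x] assms
    by (simp add: dist_real_def dist_norm)
  then show ?thesis using assms by (simp add: abs_divide field_simps)
qed

text \<open>The difference quotients decrease as \<open>t \<down> 0\<close> and are bounded below by \<open>-L |v|\<close>,
  so the one-sided limit exists and is their infimum.\<close>
lemma dir_deriv_plus_tendsto:
  "((\<lambda>t. (G (x + t *\<^sub>R v) - G x) / t) \<longlongrightarrow> dir_deriv_plus G x v) (at_right 0)"
proof -
  define Q where "Q t = (G (x + t *\<^sub>R v) - G x) / t" for t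
  have bdd: "bdd_below (Q ` {0<..})"
    using abs_difference_quotient_le unfolding Q_def abs_le_iff
    by (intro bdd_belowI2[of _ "- (L * norm v)"]) (auto simp: minus_le_iff)
  have "(Q \<longlongrightarrow> Inf (Q ` {0<..})) (at_right 0)"
  proof (rule order_tendstoI)
    fix a assume "a < Inf (Q ` {0<..})"
    then show "eventually (\<lambda>t. a < Q t) (at_right 0)"
      using bdd unfolding eventually_at_right_field
      by (intro exI[of _ 1]) (auto intro: less_le_trans cInf_lower)
  next
    fix a assume "Inf (Q ` {0<..}) < a"
    then obtain t0 where t0: "t0 > 0" "Q t0 < a"
      using bdd by (subst (asm) cInf_less_iff) auto
    have "Q t \<le> Q t0" if "0 < t" "t < t0" for t
      using that unfolding Q_def by (intro convex_on_difference_quotient_mono[OF convex]) auto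
    then show "eventually (\<lambda>t. Q t < a) (at_right 0)"
      using t0 unfolding eventually_at_right_field by (intro exI[of _ t0]) force
  qed
  moreover from this have "dir_deriv_plus G x v = Inf (Q ` {0<..})"
    unfolding dir_deriv_plus_def Q_def by (intro tendsto_Lim) auto
  ultimately show ?thesis unfolding Q_def by simp
qed

lemma dir_deriv_plus_tendsto_scaled:
  assumes "c > 0"
  shows "((\<lambda>t. (G (x + (c * t) *\<^sub>R v) - G x) / (c * t)) \<longlongrightarrow> dir_deriv_plus G x v) (at_right 0)"
proof -
  have "filterlim (\<lambda>t. c * t) (at_right 0) (at_right (0::real))"
    using assms unfolding filterlim_at eventually_at_right_field
    by (auto intro!: exI[of _ 1] tendsto_eq_intros)
  from filterlim_compose[OF dir_deriv_plus_tendsto this] show ?thesis by simp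
qed

lemma dir_deriv_plus_le_increment: "dir_deriv_plus G x u \<le> G (x + u) - G x"
proof -
  have "eventually (\<lambda>t. (G (x + t *\<^sub>R u) - G x) / t \<le> G (x + u) - G x) (at_right 0)"
    unfolding eventually_at_right_field
    using convex_on_difference_quotient_mono[OF convex, of _ 1 x u] by (intro exI[of _ 1]) auto
  from tendsto_le[OF _ tendsto_const dir_deriv_plus_tendsto this] show ?thesis by simp
qed

lemma dir_deriv_plus_lipschitz: "\<bar>dir_deriv_plus G x u - dir_deriv_plus G x u'\<bar> \<le> L * norm (u - u')"
proof -
  have "\<bar>(G (x + t *\<^sub>R u) - G x) / t - (G (x + t *\<^sub>R u') - G x) / t\<bar> \<le> L * norm (u - u')"
    if t: "0 < t" for t
  proof -
    have "\<bar>G (x + t *\<^sub>R u) - G (x + t *\<^sub>R u')\<bar> \<le> L * (t * norm (u - u'))"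
      using lipschitz_onD[OF lipschitz, of "x + t *\<^sub>R u" "x + t *\<^sub>R u'"] t
      by (simp add: dist_real_def dist_norm scaleR_diff_right[symmetric])
    then show ?thesis
      using t by (simp add: diff_divide_distrib[symmetric] abs_divide field_simps)
  qed
  then have "eventually (\<lambda>t. \<bar>(G (x + t *\<^sub>R u) - G x) / t - (G (x + t *\<^sub>R u') - G x) / t\<bar>
      \<le> L * norm (u - u')) (at_right 0)"
    unfolding eventually_at_right_field by (intro exI[of _ 1]) auto
  from tendsto_le[OF _ tendsto_const
      tendsto_rabs[OF tendsto_diff[OF dir_deriv_plus_tendsto dir_deriv_plus_tendsto]] this]
  show ?thesis by simp
qed

lemma dir_deriv_plus_zero [simp]: "dir_deriv_plus G x 0 = 0"
  unfolding dir_deriv_plus_def by (simp add: tendsto_Lim[OF _ tendsto_const])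

lemma abs_dir_deriv_plus_le: "\<bar>dir_deriv_plus G x u\<bar> \<le> L * norm u"
  using dir_deriv_plus_lipschitz[of x u 0] by simp

lemma dir_deriv_plus_scaleR:
  assumes "a \<ge> 0"
  shows "dir_deriv_plus G x (a *\<^sub>R u) = a * dir_deriv_plus G x u"
proof (cases "a = 0")
  case False
  then have a: "a > 0" using assms by simp
  have "eventually (\<lambda>t. a * ((G (x + (a * t) *\<^sub>R u) - G x) / (a * t))
      = (G (x + t *\<^sub>R (a *\<^sub>R u)) - G x) / t) (at_right 0)"
    unfolding eventually_at_right_field using a by (intro exI[of _ 1]) (auto simp: mult.commute)
  moreover have "((\<lambda>t. a * ((G (x + (a * t) *\<^sub>R u) - G x) / (a * t))) \<longlongrightarrow>
      a * dir_deriv_plus G x u) (at_right 0)"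
    by (intro tendsto_mult tendsto_const dir_deriv_plus_tendsto_scaled a)
  ultimately have "((\<lambda>t. (G (x + t *\<^sub>R (a *\<^sub>R u)) - G x) / t) \<longlongrightarrow> a * dir_deriv_plus G x u) (at_right 0)"
    using tendsto_cong by force
  from tendsto_unique[OF _ dir_deriv_plus_tendsto this] show ?thesis by simp
qed simp

text \<open>Convexity at the midpoint of \<open>x + 2t u\<close> and \<open>x + 2t u'\<close>.\<close>
lemma dir_deriv_plus_add_le:
  "dir_deriv_plus G x (u + u') \<le> dir_deriv_plus G x u + dir_deriv_plus G x u'"
proof -
  have "(G (x + t *\<^sub>R (u + u')) - G x) / t \<le>
     (G (x + (2 * t) *\<^sub>R u) - G x) / (2 * t) + (G (x + (2 * t) *\<^sub>R u') - G x) / (2 * t)"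
    if t: "0 < t" for t
  proof -
    have "x + t *\<^sub>R (u + u') = (1 - 1/2) *\<^sub>R (x + (2 * t) *\<^sub>R u) + (1/2) *\<^sub>R (x + (2 * t) *\<^sub>R u')"
      by (simp add: algebra_simps flip: scaleR_add_left)
    then have "G (x + t *\<^sub>R (u + u')) \<le> (1 - 1/2) * G (x + (2 * t) *\<^sub>R u) + (1/2) * G (x + (2 * t) *\<^sub>R u')"
      using convex_onD[OF convex, of "1/2"] by simp
    then have "(G (x + t *\<^sub>R (u + u')) - G x) / t \<le>
        ((1 - 1/2) * G (x + (2 * t) *\<^sub>R u) + (1/2) * G (x + (2 * t) *\<^sub>R u') - G x) / t"
      using t by (intro divide_right_mono) auto
    also have "\<dots> = (G (x + (2 * t) *\<^sub>R u) - G x) / (2 * t) + (G (x + (2 * t) *\<^sub>R u') - G x) / (2 * t)"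
      using t by (simp add: field_simps)
    finally show ?thesis .
  qed
  then have "eventually (\<lambda>t. (G (x + t *\<^sub>R (u + u')) - G x) / t \<le>
     (G (x + (2 * t) *\<^sub>R u) - G x) / (2 * t) + (G (x + (2 * t) *\<^sub>R u') - G x) / (2 * t)) (at_right 0)"
    unfolding eventually_at_right_field by (intro exI[of _ 1]) auto
  from tendsto_le[OF _ tendsto_add[OF dir_deriv_plus_tendsto_scaled dir_deriv_plus_tendsto_scaled]
      dir_deriv_plus_tendsto this]
  show ?thesis by simp
qed

lemma dir_deriv_plus_add_neg_nonneg: "0 \<le> dir_deriv_plus G x u + dir_deriv_plus G x (- u)"
  using dir_deriv_plus_add_le[of x u "- u"] by simp

end

section \<open>Partial infima and the convex Lipschitz extension\<close>

lemma convex_on_compose_linear: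
  assumes "convex_on T g" "linear f" "convex S" "f ` S \<subseteq> T"
  shows "convex_on S (\<lambda>x. g (f x))"
proof (rule convex_onI)
  fix \<mu> :: real and x y assume "0 < \<mu>" "\<mu> < 1" "x \<in> S" "y \<in> S"
  then show "g (f ((1 - \<mu>) *\<^sub>R x + \<mu> *\<^sub>R y)) \<le> (1 - \<mu>) * g (f x) + \<mu> * g (f y)"
    using convex_onD[OF assms(1), of \<mu> "f x" "f y"] assms(4)
    by (auto simp: linear_add[OF assms(2)] linear_scale[OF assms(2)])
qed fact

lemma convex_on_partial_Inf:
  fixes F :: "'a::real_vector \<Rightarrow> 'b::real_vector \<Rightarrow> real"
  assumes convex: "convex_on (S \<times> T) (\<lambda>(x, y). F x y)"
    and "convex S" "convex T" "T \<noteq> {}" and bdd: "\<And>x. x \<in> S \<Longrightarrow> bdd_below (F x ` T)"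
  shows "convex_on S (\<lambda>x. Inf (F x ` T))"
proof (rule convex_onI)
  fix \<mu> :: real and x1 x2 assume \<mu>: "0 < \<mu>" "\<mu> < 1" and x: "x1 \<in> S" "x2 \<in> S"
  define x where "x = (1 - \<mu>) *\<^sub>R x1 + \<mu> *\<^sub>R x2"
  have xS: "x \<in> S" unfolding x_def using \<mu> x \<open>convex S\<close> by (intro convexD) auto
  have comb: "Inf (F x ` T) \<le> (1 - \<mu>) * F x1 y1 + \<mu> * F x2 y2" if y: "y1 \<in> T" "y2 \<in> T" for y1 y2
  proof -
    have "(1 - \<mu>) *\<^sub>R y1 + \<mu> *\<^sub>R y2 \<in> T" using \<mu> y \<open>convex T\<close> by (intro convexD) auto
    then have "Inf (F x ` T) \<le> F x ((1 - \<mu>) *\<^sub>R y1 + \<mu> *\<^sub>R y2)"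
      using bdd[OF xS] by (intro cInf_lower) auto
    also have "\<dots> \<le> (1 - \<mu>) * F x1 y1 + \<mu> * F x2 y2"
      using convex_onD[OF convex, of \<mu> "(x1, y1)" "(x2, y2)"] \<mu> x y by (simp add: x_def)
    finally show ?thesis .
  qed
  have "(Inf (F x ` T) - \<mu> * F x2 y2) / (1 - \<mu>) \<le> Inf (F x1 ` T)" if "y2 \<in> T" for y2
    using comb[OF _ that] \<mu> \<open>T \<noteq> {}\<close> by (intro cInf_greatest) (auto simp: field_simps)
  then have "(Inf (F x ` T) - (1 - \<mu>) * Inf (F x1 ` T)) / \<mu> \<le> Inf (F x2 ` T)"
    using \<mu> \<open>T \<noteq> {}\<close> by (intro cInf_greatest) (auto simp: field_simps)
  then show "Inf (F x ` T) \<le> (1 - \<mu>) * Inf (F x1 ` T) + \<mu> * Inf (F x2 ` T)"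
    using \<mu> by (simp add: field_simps)
qed fact

lemma lipschitz_on_partial_Inf:
  fixes F :: "'a::metric_space \<Rightarrow> 'b \<Rightarrow> real"
  assumes lip: "\<And>y. y \<in> T \<Longrightarrow> L-lipschitz_on S (\<lambda>x. F x y)"
    and "T \<noteq> {}" and bdd: "\<And>x. x \<in> S \<Longrightarrow> bdd_below (F x ` T)"
  shows "L-lipschitz_on S (\<lambda>x. Inf (F x ` T))"
proof -
  have half: "Inf (F x ` T) \<le> Inf (F x' ` T) + L * dist x x'" if x: "x \<in> S" "x' \<in> S" for x x'
  proof -
    have "Inf (F x ` T) - L * dist x x' \<le> F x' y" if y: "y \<in> T" for y
    proof -
      have "Inf (F x ` T) \<le> F x y" using bdd[OF x(1)] y by (intro cInf_lower) auto
      moreover have "F x y - F x' y \<le> L * dist x x'"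
        using lipschitz_onD[OF lip[OF y] x] by (simp add: dist_real_def)
      ultimately show ?thesis by linarith
    qed
    then have "Inf (F x ` T) - L * dist x x' \<le> Inf (F x' ` T)"
      using \<open>T \<noteq> {}\<close> by (intro cInf_greatest) auto
    then show ?thesis by simp
  qed
  show ?thesis
  proof (rule lipschitz_onI)
    show "dist (Inf (F x ` T)) (Inf (F x' ` T)) \<le> L * dist x x'" if "x \<in> S" "x' \<in> S" for x x'
      using half[OF that] half[OF that(2,1)] by (simp add: dist_real_def dist_commute abs_le_iff)
    show "0 \<le> L" using lip lipschitz_on_nonneg \<open>T \<noteq> {}\<close> by blast
  qed
qed

text \<open>The largest \<open>L\<close>-Lipschitz function that lies below \<open>g\<close> on \<open>\<Omega>\<close>.\<close>
definition lipschitz_extension :: "'a::metric_space set \<Rightarrow> real \<Rightarrow> ('a \<Rightarrow> real) \<Rightarrow> 'a \<Rightarrow> real" where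
  "lipschitz_extension \<Omega> L g x = Inf ((\<lambda>y. g y + L * dist x y) ` \<Omega>)"

lemma lipschitz_extension_eq:
  assumes "L-lipschitz_on \<Omega> g" "x \<in> \<Omega>"
  shows "lipschitz_extension \<Omega> L g x = g x"
  unfolding lipschitz_extension_def
proof (rule cInf_eq_minimum)
  show "g x \<in> (\<lambda>y. g y + L * dist x y) ` \<Omega>" using assms(2) by force
  show "g x \<le> z" if z: "z \<in> (\<lambda>y. g y + L * dist x y) ` \<Omega>" for z
  proof -
    obtain y where "y \<in> \<Omega>" "z = g y + L * dist x y" using z by blast
    then show ?thesis using lipschitz_onD[OF assms(1) assms(2), of y] by (simp add: dist_real_def)
  qed
qed

lemma convex_lipschitz_lipschitz_extension:
  fixes g :: "'a::real_normed_vector \<Rightarrow> real"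
  assumes "convex \<Omega>" "convex_on \<Omega> g" and lip: "L-lipschitz_on \<Omega> g"
  shows "convex_lipschitz (lipschitz_extension \<Omega> L g) L"
proof (cases "\<Omega> = {}")
  case True
  then show ?thesis using lip
    by unfold_locales (auto simp: lipschitz_extension_def[abs_def] convex_on_const intro!: lipschitz_onI)
next
  case False
  define F where "F x y = g y + L * dist x y" for x y
  have L: "0 \<le> L" using lip lipschitz_on_nonneg by blast
  obtain y0 where y0: "y0 \<in> \<Omega>" using False by auto
  have bdd: "bdd_below (F x ` \<Omega>)" for x
  proof (rule bdd_belowI2)
    fix y assume y: "y \<in> \<Omega>"
    have "g y0 - g y \<le> L * dist y y0" using lipschitz_onD[OF lip y0 y] by (simp add: dist_real_def dist_commute)
    also have "\<dots> \<le> L * dist x y + L * dist x y0"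
      using mult_left_mono[OF dist_triangle3[of y y0 x] L] by (simp add: distrib_left dist_commute)
    finally show "g y0 - L * dist x y0 \<le> F x y" unfolding F_def by linarith
  qed
  have "convex_on (UNIV \<times> \<Omega>) (\<lambda>z. g (snd z))"
    using assms(1,2) by (intro convex_on_compose_linear[OF _ linear_snd]) (auto intro: convex_Times)
  moreover have "convex_on (UNIV \<times> \<Omega>) (\<lambda>z. dist 0 (fst z - snd z))"
    using assms(1) by (intro convex_on_compose_linear[OF convex_on_dist[of UNIV 0]])
      (auto intro: convex_Times linear_compose_sub linear_fst linear_snd)
  ultimately have "convex_on (UNIV \<times> \<Omega>) (\<lambda>(x, y). F x y)"
    using L by (auto simp: F_def case_prod_unfold dist_norm norm_minus_commute intro!: convex_on_add convex_on_cmul)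
  then have "convex_on UNIV (\<lambda>x. Inf (F x ` \<Omega>))"
    using assms(1) False bdd by (intro convex_on_partial_Inf) auto
  moreover have "L-lipschitz_on UNIV (\<lambda>x. Inf (F x ` \<Omega>))"
  proof (rule lipschitz_on_partial_Inf[OF _ False bdd])
    show "L-lipschitz_on UNIV (\<lambda>x. F x y)" for y
      unfolding F_def using L abs_dist_diff_le[of _ y]
      by (intro lipschitz_intros lipschitz_onI)
        (auto simp: dist_real_def dist_commute abs_mult mult_left_mono simp flip: right_diff_distrib)
  qed
  ultimately show ?thesis
    unfolding lipschitz_extension_def F_def by unfold_locales simp_all
qed

section \<open>DC functions, DC graphs and sharp minima along a subspace\<close>

lemma DC_fun_on_convex: "convex_on A f \<Longrightarrow> DC_fun_on A f"
  unfolding DC_fun_on_def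
  by (intro exI[of _ f] exI[of _ "\<lambda>_. 0"]) (auto simp: convex_on_const dest: convex_on_imp_convex)

lemma DC_fun_on_diff:
  assumes "DC_fun_on A f" "DC_fun_on A g"
  shows "DC_fun_on A (\<lambda>x. f x - g x)"
proof -
  obtain f1 f2 g1 g2 where "convex_on A f1" "convex_on A f2" "convex_on A g1" "convex_on A g2"
    "\<forall>x\<in>A. f x = f1 x - f2 x" "\<forall>x\<in>A. g x = g1 x - g2 x"
    using assms unfolding DC_fun_on_def by blast
  then show ?thesis unfolding DC_fun_on_def
    by (intro exI[of _ "\<lambda>x. f1 x + g2 x"] exI[of _ "\<lambda>x. f2 x + g1 x"]) auto
qed

lemma DC_fun_on_cmult:
  assumes "DC_fun_on A f"
  shows "DC_fun_on A (\<lambda>x. a * f x)"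
proof -
  obtain f1 f2 where f: "convex_on A f1" "convex_on A f2" "\<forall>x\<in>A. f x = f1 x - f2 x"
    using assms unfolding DC_fun_on_def by blast
  show ?thesis
  proof (cases "a \<ge> 0")
    case True
    then show ?thesis using f unfolding DC_fun_on_def
      by (intro exI[of _ "\<lambda>x. a * f1 x"] exI[of _ "\<lambda>x. a * f2 x"]) (auto simp: right_diff_distrib)
  next
    case False
    then have "convex_on A (\<lambda>x. - a * f2 x)" "convex_on A (\<lambda>x. - a * f1 x)"
      using f(1,2) by (intro convex_on_cmul; simp)+
    moreover have "\<forall>x\<in>A. a * f x = - a * f2 x - - a * f1 x"
      using f(3) by (simp add: right_diff_distrib)
    ultimately show ?thesis unfolding DC_fun_on_def by blast
  qed
qed

lemma DC_fun_on_sum: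
  assumes "convex A" "finite I" "\<And>i. i \<in> I \<Longrightarrow> DC_fun_on A (f i)"
  shows "DC_fun_on A (\<lambda>x. \<Sum>i\<in>I. f i x)"
  using assms(2,3)
proof (induction I rule: finite_induct)
  case empty
  then show ?case using DC_fun_on_convex[of A "\<lambda>_. 0"] assms(1) by (simp add: convex_on_const)
next
  case (insert i I)
  then show ?case using DC_fun_on_diff[of A "f i" "\<lambda>x. - (\<Sum>i\<in>I. f i x)"]
      DC_fun_on_cmult[of A "\<lambda>x. \<Sum>i\<in>I. f i x" "-1"] by simp
qed

lemma DC_map_on_sum_scaleR:
  assumes "convex A" "finite B" "\<And>b. b \<in> B \<Longrightarrow> DC_fun_on A (f b)"
  shows "DC_map_on A (\<lambda>x. \<Sum>b\<in>B. f b x *\<^sub>R b)"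
  unfolding DC_map_on_def
proof (intro allI impI)
  fix l :: "'b \<Rightarrow> real" assume l: "linear l"
  have "DC_fun_on A (\<lambda>x. \<Sum>b\<in>B. l b * f b x)"
    using assms by (intro DC_fun_on_sum DC_fun_on_cmult) auto
  then show "DC_fun_on A (\<lambda>x. l (\<Sum>b\<in>B. f b x *\<^sub>R b))"
    by (simp add: linear_sum[OF l] linear_scale[OF l] mult.commute)
qed

lemma lipschitz_on_sum_scaleR:
  assumes "finite B" "\<And>b. b \<in> B \<Longrightarrow> C-lipschitz_on S (f b)" "0 \<le> C"
  shows "(C * (\<Sum>b\<in>B. norm b))-lipschitz_on S (\<lambda>x. \<Sum>b\<in>B. f b x *\<^sub>R b)"
proof (rule lipschitz_onI)
  fix x y assume xy: "x \<in> S" "y \<in> S"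
  have "dist (\<Sum>b\<in>B. f b x *\<^sub>R b) (\<Sum>b\<in>B. f b y *\<^sub>R b) = norm (\<Sum>b\<in>B. (f b x - f b y) *\<^sub>R b)"
    by (simp add: dist_norm sum_subtractf scaleR_diff_left)
  also have "\<dots> \<le> (\<Sum>b\<in>B. \<bar>f b x - f b y\<bar> * norm b)"
    by (rule norm_sum[THEN order_trans]) simp
  also have "\<dots> \<le> (\<Sum>b\<in>B. C * dist x y * norm b)"
    using lipschitz_onD[OF assms(2) xy] by (intro sum_mono mult_right_mono) (auto simp: dist_real_def)
  finally show "dist (\<Sum>b\<in>B. f b x *\<^sub>R b) (\<Sum>b\<in>B. f b y *\<^sub>R b) \<le> C * (\<Sum>b\<in>B. norm b) * dist x y"
    by (simp add: sum_distrib_left sum_distrib_right mult_ac)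
qed (use assms(3) in \<open>simp add: sum_nonneg\<close>)

lemma dim_orthogonal_comp:
  fixes K :: "'a::euclidean_space set"
  assumes "subspace K"
  shows "dim (orthogonal_comp K) = DIM('a) - dim K"
proof -
  have "orthogonal_comp K = {y \<in> UNIV. \<forall>x \<in> K. orthogonal x y}"
    unfolding orthogonal_comp_def by auto
  then show ?thesis
    using dim_subspace_orthogonal_to_vectors[OF assms subspace_UNIV subset_UNIV] by simp
qed

lemma DC_surface_assoc_graph:
  fixes K :: "'a::euclidean_space set"
  assumes "subspace K" "0 < dim K" "dim K < DIM('a)"
    and "\<And>w. w \<in> orthogonal_comp K \<Longrightarrow> \<phi> w \<in> K"
    and "C-lipschitz_on (orthogonal_comp K) \<phi>" "DC_map_on (orthogonal_comp K) \<phi>"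
  shows "DC_surface_assoc (DIM('a) - dim K) K {w + \<phi> w | w. w \<in> orthogonal_comp K}"
  unfolding DC_surface_assoc_def
  using assms subspace_orthogonal_comp dim_orthogonal_comp[OF assms(1)] orthogonal_comp_self[OF assms(1)]
  by (intro conjI exI[of _ "orthogonal_comp K"] exI[of _ \<phi>]) auto

lemma sum_inner_scaleR_orthonormal:
  fixes x :: "'a::euclidean_space"
  assumes B: "pairwise orthogonal B" "\<And>b. b \<in> B \<Longrightarrow> norm b = 1" and x: "x \<in> span B"
  shows "(\<Sum>b\<in>B. (x \<bullet> b) *\<^sub>R b) = x"
proof -
  define y where "y = x - (\<Sum>b\<in>B. (b \<bullet> x / (b \<bullet> b)) *\<^sub>R b)"
  have "y \<in> span B" unfolding y_def using x by (intro span_diff span_sum span_scale) (auto intro: span_base)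
  then have "orthogonal y y" unfolding y_def by (rule Gram_Schmidt_step[OF B(1)])
  then have "y = 0" by (simp add: orthogonal_def)
  moreover have "b \<bullet> b = 1" if "b \<in> B" for b using B(2)[OF that] by (simp add: norm_eq_1)
  ultimately show ?thesis unfolding y_def by (simp add: inner_commute)
qed

definition sharp_min_along :: "('a::real_inner \<Rightarrow> real) \<Rightarrow> 'a set \<Rightarrow> 'a \<Rightarrow> real \<Rightarrow> 'a set" where
  "sharp_min_along G K c r = {x. \<forall>u\<in>K. G x + inner c u + r * norm u \<le> G (x + u)}"

definition inf_along :: "('a::real_inner \<Rightarrow> real) \<Rightarrow> 'a set \<Rightarrow> 'a \<Rightarrow> 'a \<Rightarrow> real" where
  "inf_along G K q w = Inf ((\<lambda>u. G (w + u) - inner q u) ` K)"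

lemma sharp_min_along_le:
  assumes "x \<in> sharp_min_along G K c r" "subspace K" "k \<in> K" "u \<in> K"
    and "\<And>u. u \<in> K \<Longrightarrow> inner q u \<le> inner c u + r * norm u"
  shows "G x - inner q k \<le> G (x - k + u) - inner q u"
proof -
  have uk: "u - k \<in> K" using assms(2-4) subspace_diff by blast
  have "G x + inner c (u - k) + r * norm (u - k) \<le> G (x + (u - k))"
    using assms(1) uk unfolding sharp_min_along_def by blast
  moreover have "x + (u - k) = x - k + u" by (simp add: algebra_simps)
  ultimately show ?thesis using assms(5)[OF uk] by (simp add: inner_diff_right)
qed

lemma inf_along_eq:
  assumes "x \<in> sharp_min_along G K c r" "subspace K" "k \<in> K"
    and "\<And>u. u \<in> K \<Longrightarrow> inner q u \<le> inner c u + r * norm u"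
  shows "inf_along G K q (x - k) = G x - inner q k"
  unfolding inf_along_def
proof (rule cInf_eq_minimum)
  show "G x - inner q k \<in> (\<lambda>u. G (x - k + u) - inner q u) ` K"
    using assms(3) by force
qed (use sharp_min_along_le[OF assms(1,2,3) _ assms(4)] in auto)

lemma convex_lipschitz_inf_along:
  fixes G :: "'a::real_inner \<Rightarrow> real"
  assumes "convex_lipschitz G L" "subspace K" "x0 \<in> sharp_min_along G K c r"
    and adm: "\<And>u. u \<in> K \<Longrightarrow> inner q u \<le> inner c u + r * norm u"
  shows "convex_lipschitz (inf_along G K q) L"
proof -
  interpret convex_lipschitz G L by fact
  define F where "F w u = G (w + u) - inner q u" for w u
  have lip: "L-lipschitz_on UNIV (\<lambda>w. F w u)" for u
  proof (rule lipschitz_onI)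
    show "dist (F w u) (F w' u) \<le> L * dist w w'" for w w'
      using lipschitz_onD[OF lipschitz, of "w + u" "w' + u"] by (simp add: F_def dist_real_def dist_norm)
  qed (rule nonneg)
  have K: "K \<noteq> {}" "convex K" using assms(2) subspace_0 subspace_imp_convex by blast+
  have bdd: "bdd_below (F w ` K)" for w
  proof (rule bdd_belowI2)
    fix u assume u: "u \<in> K"
    have "G x0 \<le> G (x0 + u) - inner q u"
      using sharp_min_along_le[OF assms(3,2) subspace_0[OF assms(2)] u adm] by simp
    moreover have "G (x0 + u) - G (w + u) \<le> L * dist x0 w"
      using lipschitz_onD[OF lipschitz, of "x0 + u" "w + u"] by (simp add: dist_real_def dist_norm)
    ultimately show "G x0 - L * dist x0 w \<le> F w u" unfolding F_def by linarith
  qed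
  have UK: "convex (UNIV \<times> K)" using K by (simp add: convex_Times)
  have "convex_on (UNIV \<times> K) (\<lambda>z. G (fst z + snd z))"
  proof (rule convex_on_compose_linear[OF convex _ UK])
    show "linear (\<lambda>z. fst z + snd z)" by (intro linear_compose_add linear_fst linear_snd)
  qed simp
  moreover have "convex_on (UNIV \<times> K) (\<lambda>z. - inner q (snd z))"
  proof (rule convex_on_compose_linear[of UNIV "\<lambda>x. x", OF _ _ UK])
    show "linear (\<lambda>z. - inner q (snd z))" by (rule linearI) (auto simp: inner_add_right)
  qed (simp_all add: convex_on_ident)
  ultimately have "convex_on (UNIV \<times> K) (\<lambda>z. G (fst z + snd z) + - inner q (snd z))"
    by (rule convex_on_add)
  then have "convex_on (UNIV \<times> K) (\<lambda>(w, u). F w u)"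
    by (simp add: F_def case_prod_unfold)
  then have "convex_on UNIV (\<lambda>w. Inf (F w ` K))"
    using K bdd by (intro convex_on_partial_Inf) auto
  moreover have "L-lipschitz_on UNIV (\<lambda>w. Inf (F w ` K))"
    using lip K bdd by (intro lipschitz_on_partial_Inf)
  ultimately show ?thesis
    unfolding inf_along_def[abs_def] F_def by unfold_locales
qed

text \<open>The \<open>K\<close>-component \<open>k\<close> of a point \<open>x = w + k\<close> of \<open>sharp_min_along G K c r\<close> is recovered
  from \<open>w\<close> through the convex functions \<open>inf_along G K q\<close>: by \<open>inf_along_eq\<close>,
  \<open>inf_along G K c w - inf_along G K (c + r b) w = r \<langle>b, k\<rangle>\<close> for unit vectors \<open>b \<in> K\<close>.\<close>
lemma sharp_min_along_subset_DC_surface: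
  fixes G :: "'a::euclidean_space \<Rightarrow> real"
  assumes "convex_lipschitz G L" "subspace K" "0 < dim K" "dim K < DIM('a)" "r > 0"
    and "sharp_min_along G K c r \<noteq> {}"
  shows "\<exists>S. DC_surface_assoc (DIM('a) - dim K) K S \<and> sharp_min_along G K c r \<subseteq> S"
proof -
  obtain x0 where x0: "x0 \<in> sharp_min_along G K c r" using assms(6) by blast
  obtain B where B: "B \<subseteq> K" "pairwise orthogonal B" "\<And>b. b \<in> B \<Longrightarrow> norm b = 1"
    "independent B" "span B = K"
    using orthonormal_basis_subspace[OF assms(2)] by metis
  have fB: "finite B" using B(4) independent_imp_finite by blast
  define W where "W = orthogonal_comp K"
  have W: "convex W" unfolding W_def by (intro subspace_imp_convex subspace_orthogonal_comp)
  have adm_c: "inner c u \<le> inner c u + r * norm u" for u using assms(5) by simp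
  have adm_b: "inner (c + r *\<^sub>R b) u \<le> inner c u + r * norm u" if "b \<in> B" for b u
    using norm_cauchy_schwarz[of b u] B(3)[OF that] assms(5) by (simp add: inner_add_left)
  define coef where "coef b w = (1 / r) * (inf_along G K c w - inf_along G K (c + r *\<^sub>R b) w)" for b w
  define \<phi> where "\<phi> w = (\<Sum>b\<in>B. coef b w *\<^sub>R b)" for w
  have coef_eq: "coef b (x - k) = k \<bullet> b" if "x \<in> sharp_min_along G K c r" "k \<in> K" "b \<in> B" for x k b
    using inf_along_eq[OF that(1) assms(2) that(2) adm_c] inf_along_eq[OF that(1) assms(2) that(2) adm_b[OF that(3)]]
      assms(5) by (simp add: coef_def inner_add_left inner_add_right inner_commute)
  have M: "convex_lipschitz (inf_along G K c) L" "convex_lipschitz (inf_along G K (c + r *\<^sub>R b)) L"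
    if "b \<in> B" for b
    using convex_lipschitz_inf_along[OF assms(1,2) x0] adm_c adm_b[OF that] by blast+
  have "DC_fun_on W (coef b)" if "b \<in> B" for b
    unfolding coef_def[abs_def] using convex_lipschitz.convex[OF M(1)[OF that]] convex_lipschitz.convex[OF M(2)[OF that]] W
    by (intro DC_fun_on_cmult DC_fun_on_diff DC_fun_on_convex) (auto intro: convex_on_subset)
  then have "DC_map_on W \<phi>"
    unfolding \<phi>_def[abs_def] using W fB by (intro DC_map_on_sum_scaleR)
  moreover have "(\<bar>1 / r\<bar> * (L + L) * (\<Sum>b\<in>B. norm b))-lipschitz_on W \<phi>"
  proof -
    have "(\<bar>1 / r\<bar> * (L + L))-lipschitz_on W (coef b)" if "b \<in> B" for b
      unfolding coef_def[abs_def] using convex_lipschitz.lipschitz[OF M(1)[OF that]] convex_lipschitz.lipschitz[OF M(2)[OF that]]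
      by (intro lipschitz_intros) (auto intro: lipschitz_on_subset)
    then show ?thesis unfolding \<phi>_def[abs_def] using fB convex_lipschitz.nonneg[OF assms(1)]
      by (intro lipschitz_on_sum_scaleR) auto
  qed
  moreover have "\<phi> w \<in> K" for w
    unfolding \<phi>_def using B(1) assms(2) by (intro subspace_sum subspace_scale) auto
  ultimately have "DC_surface_assoc (DIM('a) - dim K) K {w + \<phi> w | w. w \<in> W}"
    unfolding W_def by (intro DC_surface_assoc_graph assms(2-4))
  moreover have "sharp_min_along G K c r \<subseteq> {w + \<phi> w | w. w \<in> W}"
  proof
    fix x assume x: "x \<in> sharp_min_along G K c r"
    obtain k w where kw: "k \<in> K" "w \<in> W" "x = k + w"
      using subspace_sum_orthogonal_comp[OF assms(2)] unfolding W_def by (metis UNIV_I set_plus_elim)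
    have "\<phi> w = (\<Sum>b\<in>B. (k \<bullet> b) *\<^sub>R b)"
      unfolding \<phi>_def using coef_eq[OF x kw(1)] kw(3) by (intro sum.cong) auto
    also have "\<dots> = k" using B(2,3,5) kw(1) by (intro sum_inner_scaleR_orthonormal) auto
    finally show "x \<in> {w + \<phi> w | w. w \<in> W}" using kw by (auto simp: add.commute)
  qed
  ultimately show ?thesis by blast
qed

section \<open>Sublinear functions of large width\<close>

lemma subadditive_sum_le:
  fixes p :: "'a::real_vector \<Rightarrow> real"
  assumes "\<And>u v. p (u + v) \<le> p u + p v" "p 0 = 0" "finite S"
  shows "p (\<Sum>x\<in>S. f x) \<le> (\<Sum>x\<in>S. p (f x))"
  using assms(3)
proof (induction S rule: finite_induct)
  case (insert x S)
  have "p (sum f (insert x S)) = p (f x + sum f S)" using insert(1,2) by simp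
  also have "\<dots> \<le> p (f x) + p (sum f S)" by (rule assms(1))
  also have "\<dots> \<le> p (f x) + (\<Sum>x\<in>S. p (f x))" using insert(3) by simp
  also have "\<dots> = (\<Sum>x\<in>insert x S. p (f x))" using insert(1,2) by simp
  finally show ?case .
qed (simp add: assms(2))

text \<open>The heaviest weight is at least \<open>1/n\<close>, and sublinearity moves its vector to the other side.\<close>
lemma sublinear_convex_combination_gt:
  fixes p :: "'a::real_vector \<Rightarrow> real"
  assumes sub: "\<And>u v. p (u + v) \<le> p u + p v" and hom: "\<And>a u. a \<ge> 0 \<Longrightarrow> p (a *\<^sub>R u) = a * p u"
    and S: "finite S" "card S \<le> n" and w: "\<forall>x\<in>S. 0 \<le> w x" "sum w S = 1"
    and zero: "(\<Sum>x\<in>S. w x *\<^sub>R v x) = 0"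
    and wid: "\<And>x. x \<in> S \<Longrightarrow> \<epsilon> < p (v x) + p (- v x)" and "0 \<le> \<epsilon>"
  shows "\<epsilon> / n < (\<Sum>x\<in>S. w x * p (v x))"
proof -
  have p0: "p 0 = 0" using hom[of 0 0] by simp
  have "S \<noteq> {}" using w(2) by auto
  then have "Max (w ` S) \<in> w ` S" using S(1) by (intro Max_in) auto
  then obtain z where z: "z \<in> S" "w z = Max (w ` S)" by auto
  then have zmax: "w x \<le> w z" if "x \<in> S" for x using S(1) that by simp
  have "1 \<le> real (card S) * w z" using w(2) sum_bounded_above[of S w "w z", OF zmax] by simp
  also have "\<dots> \<le> n * w z" using S(2) w(1) z(1) by (intro mult_right_mono) auto
  finally have wz: "1 \<le> n * w z" .
  then have "w z \<noteq> 0" "real n \<noteq> 0" by (metis mult_zero_left mult_zero_right not_one_le_zero)+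
  then have wz_pos: "w z > 0" and n_pos: "real n > 0" using w(1) z(1) by auto
  have "w z *\<^sub>R (- v z) = (\<Sum>x\<in>S - {z}. w x *\<^sub>R v x)"
    using minus_unique zero sum.remove[OF S(1) z(1), of "\<lambda>x. w x *\<^sub>R v x"] by force
  then have "w z * p (- v z) = p (\<Sum>x\<in>S - {z}. w x *\<^sub>R v x)"
    using hom w(1) z(1) by (metis)
  also have "\<dots> \<le> (\<Sum>x\<in>S - {z}. p (w x *\<^sub>R v x))"
    using subadditive_sum_le[OF sub p0] S(1) by blast
  also have "\<dots> = (\<Sum>x\<in>S - {z}. w x * p (v x))"
    using hom w(1) by (intro sum.cong) auto
  finally have "w z * (p (v z) + p (- v z)) \<le> (\<Sum>x\<in>S. w x * p (v x))"
    using sum.remove[OF S(1) z(1), of "\<lambda>x. w x * p (v x)"] by (simp add: distrib_left)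
  moreover have "1 / n \<le> w z" using wz n_pos by (simp add: divide_le_eq mult.commute)
  then have "\<epsilon> / n \<le> w z * \<epsilon>" using mult_right_mono[OF _ \<open>0 \<le> \<epsilon>\<close>] by fastforce
  moreover have "w z * \<epsilon> < w z * (p (v z) + p (- v z))"
    using wid[OF z(1)] wz_pos by simp
  ultimately show ?thesis by linarith
qed

lemma inner_add_norm_le_if_on_sphere:
  fixes p :: "'a::real_inner \<Rightarrow> real"
  assumes hom: "\<And>a u. a \<ge> 0 \<Longrightarrow> p (a *\<^sub>R u) = a * p u" and "subspace K"
    and sphere: "\<And>v. v \<in> K \<Longrightarrow> norm v = 1 \<Longrightarrow> inner c v + \<rho> \<le> p v" and "u \<in> K"
  shows "inner c u + \<rho> * norm u \<le> p u"
proof (cases "u = 0")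
  case True
  then show ?thesis using hom[of 0 0] by simp
next
  case False
  define v where "v = u /\<^sub>R norm u"
  have v: "v \<in> K" "norm v = 1" "u = norm u *\<^sub>R v"
    unfolding v_def using assms(2,4) False subspace_scale by auto
  then have "inner c u + \<rho> * norm u = norm u * (inner c v + \<rho>)"
    by (metis distrib_left inner_scaleR_right mult.commute)
  also have "\<dots> \<le> norm u * p v" using sphere[OF v(1,2)] by (simp add: mult_left_mono)
  also have "\<dots> = p u" using hom[of "norm u" v] v(3) by simp
  finally show ?thesis .
qed

lemma convex_hull_lifted_sphere_disjoint:
  fixes p :: "'a::euclidean_space \<Rightarrow> real"
  assumes sub: "\<And>u v. p (u + v) \<le> p u + p v" and hom: "\<And>a u. a \<ge> 0 \<Longrightarrow> p (a *\<^sub>R u) = a * p u"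
    and "0 \<le> \<epsilon>" and wid: "\<And>v. v \<in> K \<Longrightarrow> norm v = 1 \<Longrightarrow> \<epsilon> < p v + p (- v)"
  shows "convex hull ((\<lambda>u. (u, p u - \<epsilon> / (DIM('a) + 2))) ` (K \<inter> sphere 0 1)) \<inter> {0} \<times> {..0} = {}"
proof (rule equals0I)
  define \<rho> where "\<rho> = \<epsilon> / (DIM('a) + 2)"
  define T where "T = (\<lambda>u. (u, p u - \<rho>)) ` (K \<inter> sphere 0 1)"
  have T: "fst z \<in> K" "norm (fst z) = 1" "snd z = p (fst z) - \<rho>" if "z \<in> T" for z
    using that unfolding T_def by auto
  fix z assume "z \<in> convex hull ((\<lambda>u. (u, p u - \<epsilon> / (DIM('a) + 2))) ` (K \<inter> sphere 0 1)) \<inter> {0} \<times> {..0}"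
  then obtain s where s: "(0, s) \<in> convex hull T" "s \<le> 0" unfolding T_def \<rho>_def by auto
  then obtain S where S: "finite S" "S \<subseteq> T" "card S \<le> DIM('a \<times> real) + 1" "(0, s) \<in> convex hull S"
    unfolding caratheodory[of T] by blast
  then obtain w where w: "\<forall>x\<in>S. 0 \<le> w x" "sum w S = 1" "(\<Sum>x\<in>S. w x *\<^sub>R x) = (0, s)"
    using convex_hull_finite[OF S(1)] by auto
  have "(\<Sum>x\<in>S. w x *\<^sub>R fst x) = 0"
    using arg_cong[OF w(3), of fst] by (simp add: fst_sum)
  then have "\<epsilon> / real (DIM('a) + 2) < (\<Sum>x\<in>S. w x * p (fst x))"
    using S(1,3) w(1,2) T S(2) \<open>0 \<le> \<epsilon>\<close> wid
    by (intro sublinear_convex_combination_gt[OF sub hom]) auto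
  moreover have "(\<Sum>x\<in>S. w x * (p (fst x) - \<rho>)) = s"
    using arg_cong[OF w(3), of snd] T S(2) by (auto simp: snd_sum intro!: sum.cong)
  then have "(\<Sum>x\<in>S. w x * p (fst x)) - \<rho> = s"
    using w(2) by (simp add: right_diff_distrib sum_subtractf flip: sum_distrib_right)
  ultimately show False using s(2) unfolding \<rho>_def by simp
qed

lemma exists_inner_eq_on_subspace:
  fixes K :: "'a::euclidean_space set"
  assumes "subspace K"
  shows "\<exists>c\<in>K. \<forall>v\<in>K. inner c v = inner c0 v"
proof -
  obtain c z where cz: "c \<in> span K" "\<And>w. w \<in> span K \<Longrightarrow> orthogonal z w" "c0 = c + z"
    using orthogonal_subspace_decomp_exists[of K c0] by metis
  have "inner c v = inner c0 v" if "v \<in> K" for v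
    using cz(2)[of v] that cz(3) span_base[of v K] by (simp add: inner_add_right orthogonal_def inner_commute)
  moreover have "c \<in> K" using cz(1) assms span_eq_iff by blast
  ultimately show ?thesis by blast
qed

text \<open>Separate the compact convex hull of the lifted unit sphere \<open>{(v, p v - \<rho>)}\<close> of \<open>K\<close> from
  the closed half-line \<open>{0} \<times> {..0}\<close>; the separating functional is not vertical because
  \<open>K\<close> contains \<open>v0\<close> and \<open>-v0\<close>.\<close>
lemma exists_inner_add_norm_le_sublinear:
  fixes p :: "'a::euclidean_space \<Rightarrow> real"
  assumes sub: "\<And>u v. p (u + v) \<le> p u + p v" and hom: "\<And>a u. a \<ge> 0 \<Longrightarrow> p (a *\<^sub>R u) = a * p u"
    and cont: "continuous_on UNIV p" and K: "subspace K" "K \<noteq> {0}" and "0 \<le> \<epsilon>"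
    and wid: "\<And>v. v \<in> K \<Longrightarrow> norm v = 1 \<Longrightarrow> \<epsilon> < p v + p (- v)"
  shows "\<exists>c\<in>K. \<forall>u\<in>K. inner c u + \<epsilon> / (DIM('a) + 2) * norm u \<le> p u"
proof -
  define \<rho> where "\<rho> = \<epsilon> / (DIM('a) + 2)"
  define T where "T = (\<lambda>u. (u, p u - \<rho>)) ` (K \<inter> sphere 0 1)"
  define R where "R = {0::'a} \<times> {..0::real}"
  obtain v0 where v0: "v0 \<in> K" "norm v0 = 1"
  proof -
    obtain v where "v \<in> K" "v \<noteq> 0" using K subspace_0 by blast
    then show ?thesis using that[of "v /\<^sub>R norm v"] K(1) subspace_scale by auto
  qed
  have "compact T"
    unfolding T_def using K(1) cont
    by (intro compact_continuous_image continuous_intros closed_Int_compact closed_subspace)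
      (auto intro: continuous_on_subset)
  then have "compact (convex hull T)" "convex (convex hull T)" "convex hull T \<noteq> {}"
    using v0 by (auto simp: compact_convex_hull T_def)
  moreover have "convex R" "closed R" unfolding R_def by (auto intro: convex_Times closed_Times)
  moreover have "convex hull T \<inter> R = {}"
    unfolding T_def R_def \<rho>_def using convex_hull_lifted_sphere_disjoint[OF sub hom \<open>0 \<le> \<epsilon>\<close> wid] .
  ultimately obtain a b where ab: "\<forall>x\<in>convex hull T. inner a x < b" "\<forall>x\<in>R. b < inner a x"
    using separating_hyperplane_compact_closed by metis
  obtain a1 a0 where a: "a = (a1, a0)" by fastforce
  have "(0, 0) \<in> R" unfolding R_def by simp
  then have b: "b < 0" using ab(2) by (metis inner_zero_right zero_prod_def)
  have a0_le: "a0 \<le> 0"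
  proof (rule ccontr)
    assume "\<not> a0 \<le> 0"
    then have "(0, b / a0) \<in> R" unfolding R_def using b by (auto simp: divide_nonpos_pos)
    then show False using ab(2) \<open>\<not> a0 \<le> 0\<close> unfolding a by auto
  qed
  have sep: "inner a1 v + a0 * (p v - \<rho>) < b" if "v \<in> K" "norm v = 1" for v
    using ab(1) hull_subset[of T convex] that unfolding a T_def by force
  have "a0 \<noteq> 0"
    using sep[OF v0] sep[of "- v0"] v0 K(1) subspace_neg b by fastforce
  then have a0: "a0 < 0" using a0_le by simp
  define c0 where "c0 = (- 1 / a0) *\<^sub>R a1"
  have c0: "inner c0 v + \<rho> \<le> p v" if "v \<in> K" "norm v = 1" for v
    using sep[OF that] b a0 unfolding c0_def by (simp add: field_simps)
  obtain c where "c \<in> K" "\<And>v. v \<in> K \<Longrightarrow> inner c v = inner c0 v"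
    using exists_inner_eq_on_subspace[OF K(1)] by blast
  then show ?thesis
    using c0 inner_add_norm_le_if_on_sphere[OF hom K(1)] unfolding \<rho>_def by (metis (no_types, lifting))
qed

section \<open>Covering \<open>Z\<^sub>\<epsilon>\<^sup>K\<close>\<close>

lemma dir_deriv_plus_diff:
  assumes "convex_lipschitz G LG" "convex_lipschitz H LH"
  shows "dir_deriv_plus (\<lambda>x. G x - H x) x v = dir_deriv_plus G x v - dir_deriv_plus H x v"
proof -
  have "((\<lambda>t. (G (x + t *\<^sub>R v) - G x) / t - (H (x + t *\<^sub>R v) - H x) / t) \<longlongrightarrow>
      dir_deriv_plus G x v - dir_deriv_plus H x v) (at_right 0)"
    using assms by (intro tendsto_diff convex_lipschitz.dir_deriv_plus_tendsto)
  moreover have "(\<lambda>t. (G (x + t *\<^sub>R v) - G x) / t - (H (x + t *\<^sub>R v) - H x) / t)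
      = (\<lambda>t. ((G (x + t *\<^sub>R v) - H (x + t *\<^sub>R v)) - (G x - H x)) / t)"
    by (simp add: fun_eq_iff diff_divide_distrib)
  ultimately show ?thesis
    unfolding dir_deriv_plus_def[of "\<lambda>x. G x - H x"] by (intro tendsto_Lim) simp_all
qed

lemma dir_deriv_plus_diff_lipschitz:
  assumes "convex_lipschitz G LG" "convex_lipschitz H LH"
  shows "\<bar>dir_deriv_plus (\<lambda>x. G x - H x) x u - dir_deriv_plus (\<lambda>x. G x - H x) x u'\<bar>
    \<le> (LG + LH) * norm (u - u')"
  using convex_lipschitz.dir_deriv_plus_lipschitz[OF assms(1), of x u u']
    convex_lipschitz.dir_deriv_plus_lipschitz[OF assms(2), of x u u']
  unfolding dir_deriv_plus_diff[OF assms] distrib_right by (smt (verit))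

lemma Z_eps_K_diff_subset:
  assumes "convex_lipschitz G LG" "convex_lipschitz H LH"
  shows "Z_eps_K UNIV (\<lambda>x. G x - H x) \<epsilon> K \<subseteq> Z_eps_K UNIV G \<epsilon> K"
proof
  fix x assume x: "x \<in> Z_eps_K UNIV (\<lambda>x. G x - H x) \<epsilon> K"
  have "\<epsilon> < dir_deriv_plus G x v + dir_deriv_plus G x (- v)" if "v \<in> K" "norm v = 1" for v
  proof -
    have "\<epsilon> < (dir_deriv_plus G x v - dir_deriv_plus H x v) + (dir_deriv_plus G x (- v) - dir_deriv_plus H x (- v))"
      using x that unfolding Z_eps_K_def dir_deriv_plus_diff[OF assms] by blast
    then show ?thesis using convex_lipschitz.dir_deriv_plus_add_neg_nonneg[OF assms(2), of x v] by linarith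
  qed
  then show "x \<in> Z_eps_K UNIV G \<epsilon> K" unfolding Z_eps_K_def by blast
qed

lemma sharp_min_along_perturb:
  assumes "x \<in> sharp_min_along G K c r" "norm (n - c) \<le> s"
  shows "x \<in> sharp_min_along G K n (r - s)"
  unfolding sharp_min_along_def
proof (intro CollectI ballI)
  fix u assume u: "u \<in> K"
  have "inner (n - c) u \<le> norm (n - c) * norm u" by (rule norm_cauchy_schwarz)
  also have "\<dots> \<le> s * norm u" using assms(2) by (simp add: mult_right_mono)
  finally have "inner n u + (r - s) * norm u \<le> inner c u + r * norm u"
    by (simp add: inner_diff_left algebra_simps)
  moreover have "G x + inner c u + r * norm u \<le> G (x + u)"
    using assms(1) u unfolding sharp_min_along_def by blast
  ultimately show "G x + inner n u + (r - s) * norm u \<le> G (x + u)" by linarith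
qed

lemma Z_eps_K_subset_sharp_min_along:
  fixes G :: "'a::euclidean_space \<Rightarrow> real"
  assumes "convex_lipschitz G L" "subspace K" "K \<noteq> {0}" "0 \<le> \<epsilon>" "x \<in> Z_eps_K UNIV G \<epsilon> K"
  shows "\<exists>c. norm c \<le> L \<and> x \<in> sharp_min_along G K c (\<epsilon> / (DIM('a) + 2))"
proof -
  interpret convex_lipschitz G L by fact
  define \<rho> where "\<rho> = \<epsilon> / (DIM('a) + 2)"
  have "L-lipschitz_on UNIV (dir_deriv_plus G x)"
    using dir_deriv_plus_lipschitz nonneg by (intro lipschitz_onI) (auto simp: dist_real_def dist_norm)
  note cont = lipschitz_on_continuous_on[OF this]
  have "\<And>v. v \<in> K \<Longrightarrow> norm v = 1 \<Longrightarrow> \<epsilon> < dir_deriv_plus G x v + dir_deriv_plus G x (- v)"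
    using assms(5) unfolding Z_eps_K_def by blast
  then obtain c where c: "c \<in> K" and cK: "\<And>u. u \<in> K \<Longrightarrow> inner c u + \<rho> * norm u \<le> dir_deriv_plus G x u"
    using exists_inner_add_norm_le_sublinear[OF dir_deriv_plus_add_le[of x] dir_deriv_plus_scaleR[of _ x]
        cont assms(2-4)]
    unfolding \<rho>_def by blast
  have "norm c * norm c \<le> L * norm c"
  proof -
    have "inner c c + \<rho> * norm c \<le> L * norm c"
      using cK[OF c] abs_dir_deriv_plus_le[of x c] by linarith
    moreover have "0 \<le> \<rho> * norm c" unfolding \<rho>_def using assms(4) by simp
    moreover have "inner c c = norm c * norm c" by (simp add: power2_norm_eq_inner[symmetric] power2_eq_square)
    ultimately show ?thesis by linarith
  qed
  then have "norm c \<le> L" using nonneg by (cases "norm c = 0") (auto simp: mult_le_cancel_right)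
  moreover have "x \<in> sharp_min_along G K c \<rho>"
    unfolding sharp_min_along_def
  proof (intro CollectI ballI)
    fix u assume "u \<in> K"
    then show "G x + inner c u + \<rho> * norm u \<le> G (x + u)"
      using cK dir_deriv_plus_le_increment[of x u] by fastforce
  qed
  ultimately show ?thesis unfolding \<rho>_def by blast
qed

text \<open>Finitely many values of \<open>c\<close>, taken from a \<open>\<rho>/2\<close>-net of the ball of radius \<open>L\<close>, suffice.\<close>
lemma Z_eps_K_covered_by_DC_surfaces:
  fixes G :: "'a::euclidean_space \<Rightarrow> real"
  assumes G: "convex_lipschitz G L" and K: "subspace K" "0 < dim K" "dim K < DIM('a)" and "0 < \<epsilon>"
  shows "\<exists>F. finite F \<and> (\<forall>S\<in>F. DC_surface_assoc (DIM('a) - dim K) K S) \<and> Z_eps_K UNIV G \<epsilon> K \<subseteq> \<Union>F"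
proof -
  define \<rho> where "\<rho> = \<epsilon> / (DIM('a) + 2)"
  have K0: "K \<noteq> {0}" using K(2) by auto
  have \<rho>: "0 < \<rho>" unfolding \<rho>_def using \<open>0 < \<epsilon>\<close> by simp
  obtain N where N: "finite N" "cball (0::'a) L \<subseteq> (\<Union>n\<in>N. ball n (\<rho>/2))"
    using seq_compact_imp_totally_bounded[OF compact_imp_seq_compact[OF compact_cball[of 0 L]]] \<rho>
    by (metis half_gt_zero)
  define N' where "N' = {n \<in> N. sharp_min_along G K n (\<rho>/2) \<noteq> {}}"
  have "\<forall>n\<in>N'. \<exists>S. DC_surface_assoc (DIM('a) - dim K) K S \<and> sharp_min_along G K n (\<rho>/2) \<subseteq> S"
    unfolding N'_def using \<rho> by (intro ballI sharp_min_along_subset_DC_surface[OF G K]) auto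
  then obtain S where S: "\<forall>n\<in>N'. DC_surface_assoc (DIM('a) - dim K) K (S n) \<and>
      sharp_min_along G K n (\<rho>/2) \<subseteq> S n"
    by (rule bchoice[elim_format]) blast
  have "Z_eps_K UNIV G \<epsilon> K \<subseteq> \<Union>(S ` N')"
  proof
    fix x assume "x \<in> Z_eps_K UNIV G \<epsilon> K"
    then obtain c where c: "norm c \<le> L" "x \<in> sharp_min_along G K c \<rho>"
      using Z_eps_K_subset_sharp_min_along[OF G K(1) K0 less_imp_le[OF \<open>0 < \<epsilon>\<close>]] unfolding \<rho>_def by blast
    then obtain n where "n \<in> N" "dist n c < \<rho>/2" using N(2) by fastforce
    then have n: "n \<in> N" "norm (n - c) \<le> \<rho>/2" by (auto simp: dist_norm)
    then have "x \<in> sharp_min_along G K n (\<rho>/2)"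
      using sharp_min_along_perturb[OF c(2) n(2)] by simp
    then show "x \<in> \<Union>(S ` N')" using S n(1) unfolding N'_def by blast
  qed
  moreover have "finite N'" unfolding N'_def using N(1) by simp
  ultimately show ?thesis using S by (intro exI[of _ "S ` N'"]) auto
qed

section \<open>Finite nets of subspaces and covering \<open>Z\<^sub>\<epsilon>\<close>\<close>

lemma abs_coeff_le_norm_orthonormal:
  fixes e :: "'i \<Rightarrow> 'a::real_inner"
  assumes "finite I" and e: "\<And>i j. i \<in> I \<Longrightarrow> j \<in> I \<Longrightarrow> inner (e i) (e j) = (if i = j then 1 else 0)"
    and "j \<in> I"
  shows "\<bar>a j\<bar> \<le> norm (\<Sum>i\<in>I. a i *\<^sub>R e i)"
proof -
  have "inner (e j) (\<Sum>i\<in>I. a i *\<^sub>R e i) = (\<Sum>i\<in>I. if i = j then a i else 0)"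
    using e[OF \<open>j \<in> I\<close>] by (auto simp: inner_sum_right intro!: sum.cong)
  also have "\<dots> = a j" using assms(1,3) by simp
  finally have "\<bar>a j\<bar> = \<bar>inner (e j) (\<Sum>i\<in>I. a i *\<^sub>R e i)\<bar>" by simp
  also have "\<dots> \<le> norm (e j) * norm (\<Sum>i\<in>I. a i *\<^sub>R e i)" by (rule Cauchy_Schwarz_ineq2)
  moreover have "norm (e j) = 1" using e[OF \<open>j \<in> I\<close> \<open>j \<in> I\<close>] by (simp add: norm_eq_1)
  ultimately show ?thesis by simp
qed

lemma norm_perturbed_orthonormal_combination_le:
  fixes e n :: "'i \<Rightarrow> 'a::real_inner" and \<eta> :: real
  assumes "finite I" and e: "\<And>i j. i \<in> I \<Longrightarrow> j \<in> I \<Longrightarrow> inner (e i) (e j) = (if i = j then 1 else 0)"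
    and n: "\<And>i. i \<in> I \<Longrightarrow> norm (n i - e i) \<le> \<eta>"
  shows "norm ((\<Sum>i\<in>I. a i *\<^sub>R n i) - (\<Sum>i\<in>I. a i *\<^sub>R e i)) \<le> card I * \<eta> * norm (\<Sum>i\<in>I. a i *\<^sub>R e i)"
proof -
  have "norm ((\<Sum>i\<in>I. a i *\<^sub>R n i) - (\<Sum>i\<in>I. a i *\<^sub>R e i)) = norm (\<Sum>i\<in>I. a i *\<^sub>R (n i - e i))"
    by (simp add: sum_subtractf scaleR_diff_right)
  also have "\<dots> \<le> (\<Sum>i\<in>I. \<bar>a i\<bar> * norm (n i - e i))"
    by (rule norm_sum[THEN order_trans]) simp
  also have "\<dots> \<le> (\<Sum>i\<in>I. norm (\<Sum>i\<in>I. a i *\<^sub>R e i) * \<eta>)"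
    using abs_coeff_le_norm_orthonormal[OF assms(1) e] n by (intro sum_mono mult_mono) auto
  finally show ?thesis by (simp add: mult_ac)
qed

lemma independent_perturbed_orthonormal:
  fixes e n :: "'i \<Rightarrow> 'a::real_inner" and \<eta> :: real
  assumes "finite I" and e: "\<And>i j. i \<in> I \<Longrightarrow> j \<in> I \<Longrightarrow> inner (e i) (e j) = (if i = j then 1 else 0)"
    and n: "\<And>i. i \<in> I \<Longrightarrow> norm (n i - e i) \<le> \<eta>" and small: "card I * \<eta> < 1"
  shows "inj_on n I" "independent (n ` I)"
proof -
  have zero: "a i = 0" if "(\<Sum>i\<in>I. a i *\<^sub>R n i) = 0" "i \<in> I" for a i
  proof -
    have "norm (\<Sum>i\<in>I. a i *\<^sub>R e i) \<le> card I * \<eta> * norm (\<Sum>i\<in>I. a i *\<^sub>R e i)"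
      using norm_perturbed_orthonormal_combination_le[OF assms(1) e n, of a] that(1) by simp
    then have "(1 - card I * \<eta>) * norm (\<Sum>i\<in>I. a i *\<^sub>R e i) \<le> 0"
      by (simp add: algebra_simps)
    then have "norm (\<Sum>i\<in>I. a i *\<^sub>R e i) = 0"
      using small by (simp add: mult_le_0_iff)
    then show ?thesis using abs_coeff_le_norm_orthonormal[OF assms(1) e that(2), of a] by simp
  qed
  show inj: "inj_on n I"
  proof (rule inj_onI)
    fix i j assume ij: "i \<in> I" "j \<in> I" "n i = n j"
    show "i = j"
    proof (rule ccontr)
      assume "i \<noteq> j"
      define a where "a x = (if x = i then 1 else if x = j then -1 else (0::real))" for x
      have "(\<Sum>x\<in>I. a x *\<^sub>R n x) = (\<Sum>x\<in>{i, j}. a x *\<^sub>R n x)"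
        using ij assms(1) unfolding a_def by (intro sum.mono_neutral_right) auto
      also have "\<dots> = 0" using \<open>i \<noteq> j\<close> ij unfolding a_def by simp
      finally show False using zero[of a i] ij(1) unfolding a_def by simp
    qed
  qed
  show "independent (n ` I)"
  proof
    assume "dependent (n ` I)"
    then obtain u where u: "\<exists>v\<in>n ` I. u v \<noteq> 0" "(\<Sum>v\<in>n ` I. u v *\<^sub>R v) = 0"
      using dependent_finite[of "n ` I"] assms(1) by auto
    have "(\<Sum>i\<in>I. u (n i) *\<^sub>R n i) = 0" using u(2) sum.reindex[OF inj, of "\<lambda>v. u v *\<^sub>R v"] by simp
    then show False using zero[of "\<lambda>i. u (n i)"] u(1) by auto
  qed
qed

lemma norm_diff_sgn_le:
  fixes v w :: "'a::real_normed_vector"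
  assumes "norm v = 1"
  shows "norm (v - sgn w) \<le> 2 * norm (v - w)"
proof (cases "w = 0")
  case False
  have "w - sgn w = ((norm w - 1) / norm w) *\<^sub>R w"
    using False by (simp add: sgn_div_norm diff_divide_distrib scaleR_diff_left inverse_eq_divide)
  then have "norm (w - sgn w) = \<bar>norm w - 1\<bar>"
    using False by (simp add: abs_divide)
  also have "\<dots> \<le> norm (v - w)" using assms norm_triangle_ineq3[of w v] by (simp add: norm_minus_commute)
  finally show ?thesis using norm_triangle_ineq[of "v - w" "w - sgn w"] by simp
qed (use assms in simp)

lemma span_image_eq_sums:
  assumes "finite I" "inj_on n I" "v \<in> span (n ` I)"
  obtains a where "v = (\<Sum>i\<in>I. a i *\<^sub>R n i)"
proof -
  obtain u where "v = (\<Sum>w\<in>n ` I. u w *\<^sub>R w)" using assms(1,3) span_finite[of "n ` I"] by auto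
  then have "v = (\<Sum>i\<in>I. u (n i) *\<^sub>R n i)" using sum.reindex[OF assms(2), of "\<lambda>w. u w *\<^sub>R w"] by simp
  then show ?thesis by (rule that)
qed

lemma close_unit_vector_if_perturbed_orthonormal:
  fixes e n :: "'i \<Rightarrow> 'a::real_inner" and \<eta> \<delta> :: real
  assumes "finite I" and e: "\<And>i j. i \<in> I \<Longrightarrow> j \<in> I \<Longrightarrow> inner (e i) (e j) = (if i = j then 1 else 0)"
    and "subspace K'" "e ` I \<subseteq> K'"
    and n: "\<And>i. i \<in> I \<Longrightarrow> norm (n i - e i) \<le> \<eta>" and "0 \<le> \<eta>" and small: "card I * \<eta> \<le> min 1 \<delta> / 4"
    and v: "v \<in> span (n ` I)" "norm v = 1"
  shows "\<exists>v'\<in>K'. norm v' = 1 \<and> norm (v - v') \<le> \<delta>"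
proof -
  have "inj_on n I" using independent_perturbed_orthonormal[OF assms(1) e n] small by linarith
  then obtain a where a: "v = (\<Sum>i\<in>I. a i *\<^sub>R n i)" using span_image_eq_sums assms(1) v(1) by blast
  define V where "V = (\<Sum>i\<in>I. a i *\<^sub>R e i)"
  have VK: "V \<in> K'" unfolding V_def using assms(3,4) by (intro subspace_sum subspace_scale) auto
  have vV: "norm (v - V) \<le> card I * \<eta> * norm V"
    using norm_perturbed_orthonormal_combination_le[OF assms(1) e n] unfolding a V_def .
  have "norm V \<le> norm v + norm (v - V)" by (metis norm_triangle_sub norm_minus_commute)
  moreover have "card I * \<eta> \<le> 1 / 4" using small by simp
  then have "card I * \<eta> * norm V \<le> norm V / 4" using mult_right_mono[of _ _ "norm V"] by fastforce
  ultimately have "norm V \<le> 2" using vV v(2) by linarith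
  moreover have "0 \<le> min 1 \<delta> / 4"
    using small \<open>0 \<le> \<eta>\<close> by (meson mult_nonneg_nonneg of_nat_0_le_iff order_trans)
  ultimately have "card I * \<eta> * norm V \<le> min 1 \<delta> / 4 * 2"
    using small by (intro mult_mono) simp_all
  then have "norm (v - V) \<le> min 1 \<delta> / 2" using vV by linarith
  then have "norm (v - V) < 1" "2 * norm (v - V) \<le> \<delta>" by auto
  then have "V \<noteq> 0" using v(2) by auto
  then show ?thesis
    using norm_diff_sgn_le[OF v(2), of V] \<open>2 * norm (v - V) \<le> \<delta>\<close> VK assms(3)
    by (intro bexI[of _ "sgn V"]) (auto simp: norm_sgn sgn_div_norm subspace_scale)
qed

lemma orthonormal_enumeration_of_subspace:
  fixes K :: "'a::euclidean_space set"
  assumes "subspace K"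
  obtains e where "e ` {0..<dim K} \<subseteq> K"
    "\<And>i j. i \<in> {0..<dim K} \<Longrightarrow> j \<in> {0..<dim K} \<Longrightarrow> inner (e i) (e j) = (if i = j then 1 else 0)"
proof -
  obtain B where B: "B \<subseteq> K" "pairwise orthogonal B" "\<And>x. x \<in> B \<Longrightarrow> norm x = 1"
    "independent B" "card B = dim K"
    using orthonormal_basis_subspace[OF assms] by metis
  obtain e where e: "bij_betw e {0..<dim K} B"
    using ex_bij_betw_nat_finite[of B] B(4,5) independent_imp_finite by metis
  have eB: "e i \<in> B" if "i \<in> {0..<dim K}" for i using e that bij_betwE by blast
  have "inner (e i) (e j) = (if i = j then 1 else 0)" if "i \<in> {0..<dim K}" "j \<in> {0..<dim K}" for i j
  proof (cases "i = j")
    case True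
    then show ?thesis using B(3)[OF eB[OF that(1)]] by (simp add: norm_eq_1)
  next
    case False
    then have "e i \<noteq> e j" using e that bij_betw_imp_inj_on inj_onD by metis
    then show ?thesis using B(2) eB that False unfolding pairwise_def orthogonal_def by simp
  qed
  moreover have "e ` {0..<dim K} \<subseteq> K" using eB B(1) by blast
  ultimately show ?thesis using that by blast
qed

lemma finite_net_of_subspaces:
  fixes \<delta> :: real
  assumes "0 < \<delta>"
  shows "\<exists>Fam. finite Fam \<and> (\<forall>K\<in>Fam. subspace K \<and> dim K = k) \<and>
     (\<forall>K'::'a::euclidean_space set. subspace K' \<and> dim K' = k \<longrightarrow>
        (\<exists>K\<in>Fam. \<forall>v\<in>K. norm v = 1 \<longrightarrow> (\<exists>v'\<in>K'. norm v' = 1 \<and> norm (v - v') \<le> \<delta>)))"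
proof -
  define I where "I = {0..<k}"
  define m where "m = min 1 \<delta>"
  define \<eta> where "\<eta> = m / (4 * k + 1)"
  have I: "finite I" "card I = k" unfolding I_def by auto
  have m: "0 < m" unfolding m_def using assms by simp
  have "real k * m \<le> m / 4 * (4 * k + 1)" using m by (simp add: algebra_simps)
  then have "real k * m / (4 * k + 1) \<le> m / 4" by (simp add: divide_le_eq)
  then have \<eta>: "0 < \<eta>" "card I * \<eta> \<le> min 1 \<delta> / 4"
    using m I(2) by (simp_all add: \<eta>_def flip: m_def)
  obtain N where N: "finite N" "cball (0::'a) 1 \<subseteq> (\<Union>n\<in>N. ball n \<eta>)"
    using seq_compact_imp_totally_bounded[OF compact_imp_seq_compact[OF compact_cball[of 0 1]]] \<eta>(1)
    by metis
  define Fam where "Fam = (\<lambda>n. span (n ` I)) ` {n \<in> I \<rightarrow>\<^sub>E N. dim (span (n ` I)) = k}"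
  have "finite Fam" unfolding Fam_def using N(1) I(1) by (intro finite_imageI finite_subset[OF _ finite_PiE]) auto
  moreover have "\<forall>K\<in>Fam. subspace K \<and> dim K = k" unfolding Fam_def by auto
  moreover have "\<exists>K\<in>Fam. \<forall>v\<in>K. norm v = 1 \<longrightarrow> (\<exists>v'\<in>K'. norm v' = 1 \<and> norm (v - v') \<le> \<delta>)"
    if K': "subspace K'" "dim K' = k" for K' :: "'a set"
  proof -
    obtain e where eB: "e ` I \<subseteq> K'"
      and orth: "\<And>i j. i \<in> I \<Longrightarrow> j \<in> I \<Longrightarrow> inner (e i) (e j) = (if i = j then 1 else 0)"
      using orthonormal_enumeration_of_subspace[OF K'(1)] K'(2) unfolding I_def by metis
    have "\<exists>m. m \<in> N \<and> dist m (e i) < \<eta>" if "i \<in> I" for i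
    proof -
      have "norm (e i) = 1" using orth[OF that that] by (simp add: norm_eq_1)
      then have "e i \<in> cball 0 1" by simp
      then show ?thesis using N(2) by fastforce
    qed
    then obtain n where "\<forall>i\<in>I. n i \<in> N \<and> dist (n i) (e i) < \<eta>"
      using bchoice[of I "\<lambda>i m. m \<in> N \<and> dist m (e i) < \<eta>"] by blast
    then have n: "\<And>i. i \<in> I \<Longrightarrow> n i \<in> N" "\<And>i. i \<in> I \<Longrightarrow> norm (n i - e i) \<le> \<eta>"
      by (auto simp: dist_norm)
    have "inj_on n I" "independent (n ` I)"
      using independent_perturbed_orthonormal[OF I(1) orth n(2)] \<eta> by linarith+
    then have "dim (span (n ` I)) = k" using I(2) by (simp add: dim_span dim_eq_card_independent card_image)
    then have "span (n ` I) \<in> Fam"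
      unfolding Fam_def using n(1) by (intro image_eqI[of _ _ "restrict n I"]) auto
    moreover have "\<exists>v'\<in>K'. norm v' = 1 \<and> norm (v - v') \<le> \<delta>" if "v \<in> span (n ` I)" "norm v = 1" for v
      using close_unit_vector_if_perturbed_orthonormal[OF I(1) orth K'(1) eB n(2)] \<eta> that by auto
    ultimately show ?thesis by blast
  qed
  ultimately show ?thesis by blast
qed

lemma Z_eps_K_subset_of_close:
  assumes lip: "\<And>x u u'. x \<in> \<Omega> \<Longrightarrow> \<bar>dir_deriv_plus f x u - dir_deriv_plus f x u'\<bar> \<le> M * norm (u - u')"
    and "0 \<le> M" and close: "\<forall>v\<in>K. norm v = 1 \<longrightarrow> (\<exists>v'\<in>K'. norm v' = 1 \<and> norm (v - v') \<le> \<delta>)"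
    and "2 * M * \<delta> \<le> \<epsilon> - \<epsilon>'"
  shows "Z_eps_K \<Omega> f \<epsilon> K' \<subseteq> Z_eps_K \<Omega> f \<epsilon>' K"
proof
  fix x assume x: "x \<in> Z_eps_K \<Omega> f \<epsilon> K'"
  have "\<epsilon>' < dir_deriv_plus f x v + dir_deriv_plus f x (- v)" if v: "v \<in> K" "norm v = 1" for v
  proof -
    obtain v' where v': "v' \<in> K'" "norm v' = 1" "norm (v - v') \<le> \<delta>" using close v by blast
    have eps: "\<epsilon> < dir_deriv_plus f x v' + dir_deriv_plus f x (- v')"
      and "x \<in> \<Omega>" using x v' unfolding Z_eps_K_def by blast+
    have "M * norm (v - v') \<le> M * \<delta>" using mult_left_mono[OF v'(3) \<open>0 \<le> M\<close>] .
    moreover have "\<bar>dir_deriv_plus f x (- v) - dir_deriv_plus f x (- v')\<bar> \<le> M * norm (v - v')"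
      using lip[OF \<open>x \<in> \<Omega>\<close>, of "- v" "- v'"] by (simp add: norm_minus_commute)
    ultimately show ?thesis
      using eps lip[OF \<open>x \<in> \<Omega>\<close>, of v v'] assms(4) by (simp add: abs_le_iff)
  qed
  then show "x \<in> Z_eps_K \<Omega> f \<epsilon>' K" using x unfolding Z_eps_K_def by blast
qed

lemma Z_eps_covered_by_DC_surfaces:
  fixes G H :: "'a::euclidean_space \<Rightarrow> real"
  assumes G: "convex_lipschitz G LG" and H: "convex_lipschitz H LH" and k: "0 < k" "k < DIM('a)"
    and "0 < \<epsilon>"
  shows "\<exists>F. finite F \<and> (\<forall>S\<in>F. DC_surface (DIM('a) - k) S) \<and> Z_eps UNIV (\<lambda>x. G x - H x) \<epsilon> k \<subseteq> \<Union>F"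
proof -
  define M where "M = LG + LH"
  have M: "0 \<le> M" unfolding M_def using convex_lipschitz.nonneg[OF G] convex_lipschitz.nonneg[OF H] by simp
  define \<delta> where "\<delta> = \<epsilon> / (4 * M + 1)"
  have "0 < \<delta>" unfolding \<delta>_def using \<open>0 < \<epsilon>\<close> M by simp
  have "2 * M * \<epsilon> \<le> \<epsilon> / 2 * (4 * M + 1)" using \<open>0 < \<epsilon>\<close> by (simp add: algebra_simps)
  then have "2 * M * \<delta> \<le> \<epsilon> - \<epsilon> / 2" using M by (simp add: \<delta>_def divide_le_eq)
  note lip = dir_deriv_plus_diff_lipschitz[OF G H, folded M_def]
  obtain Fam where Fam: "finite Fam" "\<forall>K\<in>Fam. subspace K \<and> dim K = k"
    "\<forall>K'::'a set. subspace K' \<and> dim K' = k \<longrightarrow>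
        (\<exists>K\<in>Fam. \<forall>v\<in>K. norm v = 1 \<longrightarrow> (\<exists>v'\<in>K'. norm v' = 1 \<and> norm (v - v') \<le> \<delta>))"
    using finite_net_of_subspaces[OF \<open>0 < \<delta>\<close>, of k] by (elim exE conjE) (rule that)
  have "\<forall>K\<in>Fam. \<exists>F. finite F \<and> (\<forall>S\<in>F. DC_surface_assoc (DIM('a) - k) K S) \<and> Z_eps_K UNIV G (\<epsilon> / 2) K \<subseteq> \<Union>F"
  proof
    fix K assume "K \<in> Fam"
    then have "subspace K" "dim K = k" using Fam(2) by auto
    then show "\<exists>F. finite F \<and> (\<forall>S\<in>F. DC_surface_assoc (DIM('a) - k) K S) \<and> Z_eps_K UNIV G (\<epsilon> / 2) K \<subseteq> \<Union>F"
      using Z_eps_K_covered_by_DC_surfaces[OF G \<open>subspace K\<close>] k \<open>0 < \<epsilon>\<close> by simp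
  qed
  then obtain F where "\<forall>K\<in>Fam. finite (F K) \<and> (\<forall>S\<in>F K. DC_surface_assoc (DIM('a) - k) K S) \<and>
      Z_eps_K UNIV G (\<epsilon> / 2) K \<subseteq> \<Union>(F K)"
    by (rule bchoice[elim_format]) blast
  then have F: "\<And>K. K \<in> Fam \<Longrightarrow> finite (F K)"
    "\<And>K S. K \<in> Fam \<Longrightarrow> S \<in> F K \<Longrightarrow> DC_surface_assoc (DIM('a) - k) K S"
    "\<And>K. K \<in> Fam \<Longrightarrow> Z_eps_K UNIV G (\<epsilon> / 2) K \<subseteq> \<Union>(F K)"
    by blast+
  have "Z_eps UNIV (\<lambda>x. G x - H x) \<epsilon> k \<subseteq> \<Union>(\<Union>(F ` Fam))"
  proof
    fix x assume "x \<in> Z_eps UNIV (\<lambda>x. G x - H x) \<epsilon> k"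
    then obtain K' where K': "subspace K'" "dim K' = k" and x: "x \<in> Z_eps_K UNIV (\<lambda>x. G x - H x) \<epsilon> K'"
      unfolding Z_eps_def by blast
    obtain K where K: "K \<in> Fam" "\<forall>v\<in>K. norm v = 1 \<longrightarrow> (\<exists>v'\<in>K'. norm v' = 1 \<and> norm (v - v') \<le> \<delta>)"
      using Fam(3) K' by blast
    have "x \<in> Z_eps_K UNIV (\<lambda>x. G x - H x) (\<epsilon> / 2) K"
      using Z_eps_K_subset_of_close[OF lip M K(2) \<open>2 * M * \<delta> \<le> \<epsilon> - \<epsilon> / 2\<close>] x by blast
    then have "x \<in> Z_eps_K UNIV G (\<epsilon> / 2) K" using Z_eps_K_diff_subset[OF G H] by blast
    then show "x \<in> \<Union>(\<Union>(F ` Fam))" using F(3)[OF K(1)] K(1) by blast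
  qed
  then show ?thesis
    using Fam(1) F(1,2) unfolding DC_surface_def by (intro exI[of _ "\<Union>(F ` Fam)"]) blast
qed

lemma dir_deriv_plus_cong:
  assumes "open \<Omega>" "x \<in> \<Omega>" "\<And>y. y \<in> \<Omega> \<Longrightarrow> f y = g y"
  shows "dir_deriv_plus f x v = dir_deriv_plus g x v"
proof -
  have "eventually (\<lambda>t. x + t *\<^sub>R v \<in> \<Omega>) (at_right 0)"
  proof -
    have "((\<lambda>t. x + t *\<^sub>R v) \<longlongrightarrow> x + 0 *\<^sub>R v) (at_right 0)" by (intro tendsto_intros)
    then show ?thesis using topological_tendstoD[OF _ assms(1)] assms(2) by simp
  qed
  then have "eventually (\<lambda>t. (f (x + t *\<^sub>R v) - f x) / t = (g (x + t *\<^sub>R v) - g x) / t) (at_right 0)"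
    by eventually_elim (simp add: assms)
  then show ?thesis unfolding dir_deriv_plus_def by (rule Lim_cong) simp
qed

lemma Z_eps_K_cong:
  assumes "open \<Omega>" "\<And>y. y \<in> \<Omega> \<Longrightarrow> f y = g y"
  shows "Z_eps_K \<Omega> f \<epsilon> K = Z_eps_K \<Omega> g \<epsilon> K"
proof -
  have "dir_deriv_plus f x v = dir_deriv_plus g x v" if "x \<in> \<Omega>" for x v
    using dir_deriv_plus_cong[OF assms(1) that assms(2)] .
  then show ?thesis unfolding Z_eps_K_def by auto
qed

theorem proposition5p1:
  fixes \<Omega> :: "'a::euclidean_space set" and g h :: "'a \<Rightarrow> real" and k :: nat and \<epsilon> :: real
  assumes "1 \<le> k" "k < DIM('a)"
    and "open \<Omega>" "convex \<Omega>"
    and "convex_on \<Omega> g" "convex_on \<Omega> h"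
    and "\<exists>C. C-lipschitz_on \<Omega> g" "\<exists>C. C-lipschitz_on \<Omega> h"
    and "\<epsilon> > 0"
  shows "(\<forall>K. subspace K \<and> dim K = k \<longrightarrow>
            (\<exists>F. finite F \<and> (\<forall>S\<in>F. DC_surface_assoc (DIM('a) - k) K S) \<and>
                 Z_eps_K \<Omega> (\<lambda>x. g x - h x) \<epsilon> K \<subseteq> \<Union>F))
       \<and> (\<exists>F. finite F \<and> (\<forall>S\<in>F. DC_surface (DIM('a) - k) S) \<and>
                 Z_eps \<Omega> (\<lambda>x. g x - h x) \<epsilon> k \<subseteq> \<Union>F)"
proof -
  obtain Lg Lh where lg: "Lg-lipschitz_on \<Omega> g" and lh: "Lh-lipschitz_on \<Omega> h" using assms(7,8) by blast
  define G where "G = lipschitz_extension \<Omega> Lg g"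
  define H where "H = lipschitz_extension \<Omega> Lh h"
  have GH: "convex_lipschitz G Lg" "convex_lipschitz H Lh"
    unfolding G_def H_def using assms(4-6) lg lh by (blast intro: convex_lipschitz_lipschitz_extension)+
  have Z: "Z_eps_K \<Omega> (\<lambda>x. g x - h x) \<epsilon> K \<subseteq> Z_eps_K UNIV (\<lambda>x. G x - H x) \<epsilon> K" for K
  proof -
    have "Z_eps_K \<Omega> (\<lambda>x. g x - h x) \<epsilon> K = Z_eps_K \<Omega> (\<lambda>x. G x - H x) \<epsilon> K"
      using lipschitz_extension_eq[OF lg] lipschitz_extension_eq[OF lh] unfolding G_def H_def
      by (intro Z_eps_K_cong assms(3)) simp
    also have "\<dots> \<subseteq> Z_eps_K UNIV (\<lambda>x. G x - H x) \<epsilon> K" unfolding Z_eps_K_def by blast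
    finally show ?thesis .
  qed
  have k: "0 < k" using assms(1) by simp
  show ?thesis
  proof (intro conjI allI impI)
    fix K :: "'a set" assume "subspace K \<and> dim K = k"
    then have K: "subspace K" "dim K = k" by auto
    obtain F where F: "finite F" "\<forall>S\<in>F. DC_surface_assoc (DIM('a) - k) K S" "Z_eps_K UNIV G \<epsilon> K \<subseteq> \<Union>F"
      using Z_eps_K_covered_by_DC_surfaces[OF GH(1) K(1), unfolded K(2), OF k assms(2,9)] by blast
    have "Z_eps_K \<Omega> (\<lambda>x. g x - h x) \<epsilon> K \<subseteq> Z_eps_K UNIV G \<epsilon> K"
      using Z[of K] Z_eps_K_diff_subset[OF GH] by (rule order_trans)
    with F show "\<exists>F. finite F \<and> (\<forall>S\<in>F. DC_surface_assoc (DIM('a) - k) K S) \<and>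
                 Z_eps_K \<Omega> (\<lambda>x. g x - h x) \<epsilon> K \<subseteq> \<Union>F"
      by (meson order_trans)
  next
    have "Z_eps \<Omega> (\<lambda>x. g x - h x) \<epsilon> k \<subseteq> Z_eps UNIV (\<lambda>x. G x - H x) \<epsilon> k"
      using Z unfolding Z_eps_def by blast
    with Z_eps_covered_by_DC_surfaces[OF GH k assms(2,9)]
    show "\<exists>F. finite F \<and> (\<forall>S\<in>F. DC_surface (DIM('a) - k) S) \<and> Z_eps \<Omega> (\<lambda>x. g x - h x) \<epsilon> k \<subseteq> \<Union>F"
      by (meson order_trans)
  qed
qed

end
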